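(* Let $A\in\mathbb{C}^{n\times n}$, and fix $A^-\in A\{1\}$ and $A^{GD}\in A\{GD\}$. Then $A^{GD}AA^{-}$ is the $(A^{GD}A,\,AA^{-})$-inverse of $A$.
   Context: For $A\in\mathbb{C}^{n\times n}$, $ind(A)$ is the smallest nonnegative integer $k$ with $\mathrm{rank}(A^k)=\mathrm{rank}(A^{k+1})$. $A\{1\}$ is the set of matrices $X$ with $AXA=A$. With $k=ind(A)$, $A\{GD\}$ is the set of G-Drazin inverses of $A$: matrices $X$ with $AXA=A$, $XA^{k+1}=A^k$, $A^{k+1}X=A^k$. For $A,B,C\in\mathbb{C}^{n\times n}$, a matrix $X\in\mathbb{C}^{n\times n}$ is the $(B,C)$-inverse of $A$ if $XAB=B$, $CAX=C$, $N(C)\subseteq N(X)$ and $R(X)\subseteq R(B)$ (such $X$, if it exists, is unique); $R(\cdot)$, $N(\cdot)$ denote range and null space. *)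

theory Defs
  imports "HOL-Analysis.Analysis"
begin

primrec mpow :: "'a::comm_ring_1^'n^'n \<Rightarrow> nat \<Rightarrow> 'a^'n^'n" where
  "mpow A 0 = mat 1"
| "mpow A (Suc k) = A ** mpow A k"

definition ind :: "complex^'n^'n \<Rightarrow> nat" where
  "ind A = (LEAST k. rank (mpow A k) = rank (mpow A (Suc k)))"

definition mrange :: "complex^'n^'n \<Rightarrow> (complex^'n) set" where
  "mrange A = range (\<lambda>x. A *v x)"

definition mnull :: "complex^'n^'n \<Rightarrow> (complex^'n) set" where
  "mnull A = {x. A *v x = 0}"

definition inner1 :: "complex^'n^'n \<Rightarrow> (complex^'n^'n) set" where
  "inner1 A = {X. A ** X ** A = A}"

definition GD_inverses :: "complex^'n^'n \<Rightarrow> (complex^'n^'n) set" where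
  "GD_inverses A = {X. A ** X ** A = A
      \<and> X ** mpow A (Suc (ind A)) = mpow A (ind A)
      \<and> mpow A (Suc (ind A)) ** X = mpow A (ind A)}"

definition is_BC_inverse :: "complex^'n^'n \<Rightarrow> complex^'n^'n \<Rightarrow> complex^'n^'n \<Rightarrow> complex^'n^'n \<Rightarrow> bool" where
  "is_BC_inverse A B C X \<longleftrightarrow> X ** A ** B = B \<and> C ** A ** X = C
      \<and> mnull C \<subseteq> mnull X \<and> mrange X \<subseteq> mrange B"

end

theory Submission
  imports Defs
begin

(* For any two inner inverses G, M of A the
   two equations collapse to AGA = A and AMA = A after reassociation, and the factorisations
   GAM = G(AM) = (GA)M give the null space and range inclusions. *)

lemma mnull_subset_mnull_mult: "mnull B \<subseteq> mnull (C ** B)"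
  unfolding mnull_def by (auto simp: matrix_vector_mul_assoc[symmetric])

lemma mrange_mult_subset_mrange: "mrange (B ** C) \<subseteq> mrange B"
  unfolding mrange_def by (auto simp: matrix_vector_mul_assoc[symmetric])

lemma GD_inverses_subset_inner1: "GD_inverses A \<subseteq> inner1 A"
  unfolding GD_inverses_def inner1_def by blast

lemma is_BC_inverse_inner1_product:
  assumes G: "G \<in> inner1 A" and M: "M \<in> inner1 A"
  shows "is_BC_inverse A (G ** A) (A ** M) (G ** A ** M)"
proof -
  have AGA: "A ** G ** A = A" and AMA: "A ** M ** A = A"
    using G M by (simp_all add: inner1_def)
  have "G ** A ** M ** A ** (G ** A) = G ** A"
    by (metis AMA AGA matrix_mul_assoc)
  moreover have "A ** M ** A ** (G ** A ** M) = A ** M"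
    by (metis AMA AGA matrix_mul_assoc)
  moreover have "mnull (A ** M) \<subseteq> mnull (G ** A ** M)"
    using mnull_subset_mnull_mult[of "A ** M" G] by (simp add: matrix_mul_assoc)
  moreover have "mrange (G ** A ** M) \<subseteq> mrange (G ** A)"
    by (rule mrange_mult_subset_mrange)
  ultimately show ?thesis
    unfolding is_BC_inverse_def by simp
qed

theorem theorem2p10:
  fixes A Am Agd :: "complex^'n^'n"
  assumes "Am \<in> inner1 A" and "Agd \<in> GD_inverses A"
  shows "is_BC_inverse A (Agd ** A) (A ** Am) (Agd ** A ** Am)"
  using assms GD_inverses_subset_inner1 by (blast intro: is_BC_inverse_inner1_product)

end
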